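(* Let $R_1,R_2,R_3$ be mutually orthogonal unit vectors in $\mathbb{R}^3$, $w_1,w_2,w_3\ge0$, $\nu_1,\nu_2,\nu_3$ Borel probability measures on $[-1,1]$, $\hat I=\sum_{i=1}^3w_iA_{R_i,\nu_i}$, and $E^0=\int d\hat I$, $E^1=\int\Omega\,d\hat I$, $E^2=\int\Omega\otimes\Omega\,d\hat I$. Let $\lambda_i=R_i^TE^2R_i$ and $F_i=E^1\cdot R_i$. Assume $\lambda_i>0$ for $i=1,2,3$ and \[ \frac{F_1^2}{\lambda_1}+\frac{F_2^2}{\lambda_2}+\frac{F_3^2}{\lambda_3}=E^0. \] Then at least one of the following holds: (1) there is $i$ with $\lambda_i=F_i^2/E^0$, and for the two other indices $j,k$ one has $\lambda_j=\lambda_k$ and $F_j=F_k=0$; (2) $|F_j|=\lambda_j$ for all $j=1,2,3$.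
   Context: For a unit vector $R\in\mathbb{R}^3$ and a finite Borel measure $\nu$ on $[-1,1]$, $A_{R,\nu}$ denotes the axisymmetric measure on the unit sphere $\mathbb{S}^2$ defined by $\int\varphi\,dA_{R,\nu}=\frac{1}{2\pi}\int_{-1}^1\int_0^{2\pi}\varphi\big(\mu R+\sqrt{1-\mu^2}(\cos\theta\,P+\sin\theta\,Q)\big)\,d\theta\,d\nu(\mu)$ for continuous $\varphi$, where $(P,Q,R)$ is any orthonormal basis. If $\nu$ has density $f$, then $A_{R,\nu}$ has density $\frac{1}{2\pi}f(\Omega\cdot R)$ with respect to surface measure. *)

theory Defs
  imports "HOL-Probability.Probability"
begin

text \<open>An orthonormal completion (P,Q) of a unit vector R in R^3 (any choice; the
  axisymmetric measure does not depend on it).\<close>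
definition obasis :: "(real^3) \<Rightarrow> ((real^3) \<times> (real^3))" where
  "obasis R = (SOME (P,Q). norm P = 1 \<and> norm Q = 1 \<and> P \<bullet> Q = 0 \<and> P \<bullet> R = 0 \<and> Q \<bullet> R = 0)"

text \<open>The axisymmetric measure A_{R,nu} on the sphere (as a measure on R^3): the image of
  nu times the normalised Lebesgue measure d theta/(2 pi) on [0,2 pi] under
  (mu,theta) |-> mu R + sqrt(1-mu^2)(cos theta P + sin theta Q).\<close>
definition axi :: "real^3 \<Rightarrow> real measure \<Rightarrow> (real^3) measure" where
  "axi R \<nu> = (case obasis R of (P,Q) \<Rightarrow>
     distr (\<nu> \<Otimes>\<^sub>M uniform_measure lborel {0..2*pi}) borel
       (\<lambda>(\<mu>,\<theta>). \<mu> *\<^sub>R R + sqrt (1 - \<mu>\<^sup>2) *\<^sub>R (cos \<theta> *\<^sub>R P + sin \<theta> *\<^sub>R Q)))"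

text \<open>Moments of I = sum_i w_i A_{R_i,nu_i}, i = 1,2,3 (integrals against the sum
  measure are the weighted sums of the integrals).\<close>
definition mom0 :: "(nat \<Rightarrow> real^3) \<Rightarrow> (nat \<Rightarrow> real) \<Rightarrow> (nat \<Rightarrow> real measure) \<Rightarrow> real" where
  "mom0 R w \<nu> = (\<Sum>i\<in>{1,2,3}. w i * (\<integral>\<Omega>. 1 \<partial>axi (R i) (\<nu> i)))"

definition mom1 :: "(nat \<Rightarrow> real^3) \<Rightarrow> (nat \<Rightarrow> real) \<Rightarrow> (nat \<Rightarrow> real measure) \<Rightarrow> real^3" where
  "mom1 R w \<nu> = (\<Sum>i\<in>{1,2,3}. w i *\<^sub>R (\<integral>\<Omega>. \<Omega> \<partial>axi (R i) (\<nu> i)))"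

definition mom2 :: "(nat \<Rightarrow> real^3) \<Rightarrow> (nat \<Rightarrow> real) \<Rightarrow> (nat \<Rightarrow> real measure) \<Rightarrow> real^3^3" where
  "mom2 R w \<nu> = (\<Sum>i\<in>{1,2,3}. w i *\<^sub>R (\<integral>\<Omega>. (\<chi> a b. \<Omega>$a * \<Omega>$b) \<partial>axi (R i) (\<nu> i)))"

end

theory Submission
  imports Defs
begin

text \<open>Averaging over the angle theta kills every term linear in cos theta, sin theta and their
  product. Hence A_{R,nu} is a probability measure with first moment a R and with second moment
  quadratic form v |-> b (R.v)^2 + (1 - b)(|v|^2 - (R.v)^2)/2, where a and b are the first two
  moments of nu. In the frame R_1, R_2, R_3 this gives E^0 = sum w_i, F_j = w_j a_j and
  lambda_j = w_j b_j + sum_{i ~= j} w_i (1 - b_i)/2. As a_j^2 <= b_j <= 1, each term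
  F_j^2/lambda_j is at most w_j, so the hypothesis forces equality termwise: a direction with
  w_j > 0 has a_j^2 = b_j, and b_i = 1 for every other direction of positive weight. With two
  positive weights this gives lambda_j = w_j = |F_j| for all j; with only one it gives (1).\<close>

section \<open>Averages over a uniformly distributed angle\<close>

lemma integral_uniform_measure_Icc:
  fixes f :: "real \<Rightarrow> real"
  assumes "a < b" and [measurable]: "f \<in> borel_measurable borel"
  shows "integral\<^sup>L (uniform_measure lborel {a..b}) f = (LBINT x:{a..b}. f x) / (b - a)"
proof -
  have "uniform_measure lborel {a..b} = density lborel (\<lambda>x. ennreal (indicator {a..b} x / (b - a)))"
    unfolding uniform_measure_def
    by (rule density_cong) (use assms(1) in \<open>auto simp: indicator_def divide_ennreal
        ennreal_1[symmetric] simp del: ennreal_1\<close>)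
  then have "integral\<^sup>L (uniform_measure lborel {a..b}) f
      = (\<integral>x. indicator {a..b} x / (b - a) * f x \<partial>lborel)"
    by (simp, subst integral_density) (use assms(1) in auto)
  then show ?thesis
    by (simp add: set_lebesgue_integral_def)
qed

lemma integral_uniform_measure_Icc_FTC:
  fixes f F :: "real \<Rightarrow> real"
  assumes "a < b" and F: "\<And>x. (F has_real_derivative f x) (at x)" and f: "continuous_on UNIV f"
  shows "integral\<^sup>L (uniform_measure lborel {a..b}) f = (F b - F a) / (b - a)"
proof -
  have "f \<in> borel_measurable borel" using f by (rule borel_measurable_continuous_onI)
  moreover have "(LBINT x:{a..b}. f x) = F b - F a"
    unfolding set_lebesgue_integral_def
    using assms(1) continuous_on_subset[OF f] has_field_derivative_at_within[OF F]
    by (intro integral_FTC_atLeastAtMost)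
      (auto simp: has_real_derivative_iff_has_vector_derivative[symmetric])
  ultimately show ?thesis using assms(1) by (simp add: integral_uniform_measure_Icc)
qed

abbreviation angle_measure :: "real measure" where
  "angle_measure \<equiv> uniform_measure lborel {0..2*pi}"

lemma prob_space_angle_measure: "prob_space angle_measure"
  by (rule prob_space_uniform_measure) auto

lemma integral_angle_measure_trig:
  fixes c s t :: real
  shows "(\<integral>\<theta>. c + s * cos \<theta> + t * sin \<theta> \<partial>angle_measure) = c"
proof -
  have "(\<integral>\<theta>. c + s * cos \<theta> + t * sin \<theta> \<partial>angle_measure)
      = ((c * (2*pi) + s * sin (2*pi) - t * cos (2*pi)) - (c * 0 + s * sin 0 - t * cos 0)) / (2*pi - 0)"
    by (rule integral_uniform_measure_Icc_FTC) (auto intro!: derivative_eq_intros continuous_intros)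
  then show ?thesis by simp
qed

lemma integral_angle_measure_trig_square:
  fixes c s t :: real
  shows "(\<integral>\<theta>. (c + s * cos \<theta> + t * sin \<theta>)\<^sup>2 \<partial>angle_measure) = c\<^sup>2 + (s\<^sup>2 + t\<^sup>2) / 2"
proof -
  define F where "F x = c\<^sup>2 * x + s\<^sup>2 * (x + sin x * cos x) / 2 + t\<^sup>2 * (x - sin x * cos x) / 2
    + 2 * c * s * sin x - 2 * c * t * cos x + s * t * (sin x)\<^sup>2" for x
  have F': "(F has_real_derivative (c + s * cos x + t * sin x)\<^sup>2) (at x)" for x
  proof -
    have "(c + s * cos x + t * sin x)\<^sup>2 = c\<^sup>2 + s\<^sup>2 * (cos x * cos x - sin x * sin x + 1) / 2
       + t\<^sup>2 * (1 - (cos x * cos x - sin x * sin x)) / 2 + 2 * c * s * cos x + 2 * c * t * sin x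
       + s * t * (2 * sin x * cos x)"
      using sin_cos_squared_add[of x] by (simp add: power2_eq_square) algebra
    then show ?thesis
      unfolding F_def by (auto intro!: derivative_eq_intros simp: power2_eq_square field_simps)
  qed
  have "(\<integral>\<theta>. (c + s * cos \<theta> + t * sin \<theta>)\<^sup>2 \<partial>angle_measure) = (F (2*pi) - F 0) / (2*pi - 0)"
    by (rule integral_uniform_measure_Icc_FTC[OF _ F']) (auto intro!: continuous_intros)
  moreover have "F (2*pi) - F 0 = 2*pi * (c\<^sup>2 + (s\<^sup>2 + t\<^sup>2) / 2)"
    by (simp add: F_def algebra_simps)
  ultimately show ?thesis by simp
qed

section \<open>Moments of axisymmetric measures\<close>

lemma quadratic_form_integral_outer:
  fixes M :: "(real^'n) measure" and v :: "real^'n"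
  assumes "integrable M (\<lambda>\<Omega>. \<chi> a b. \<Omega>$a * \<Omega>$b)"
  shows "v \<bullet> ((\<integral>\<Omega>. (\<chi> a b. \<Omega>$a * \<Omega>$b) \<partial>M) *v v) = (\<integral>\<Omega>. (\<Omega> \<bullet> v)\<^sup>2 \<partial>M)"
proof -
  have T: "bounded_linear (\<lambda>A::real^'n^'n. v \<bullet> (A *v v))"
    unfolding linear_conv_bounded_linear[symmetric]
    by (rule linearI) (simp_all add: matrix_vector_mult_add_rdistrib inner_add_right
        scaleR_matrix_vector_assoc[symmetric])
  have outer: "v \<bullet> ((\<chi> a b. \<Omega>$a * \<Omega>$b) *v v) = (\<Omega> \<bullet> v)\<^sup>2" for \<Omega> :: "real^'n"
  proof -
    have "v \<bullet> ((\<chi> a b. \<Omega>$a * \<Omega>$b) *v v)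
        = (\<Sum>a\<in>UNIV. \<Sum>b\<in>UNIV. (\<Omega>$a * v$a) * (\<Omega>$b * v$b))"
      by (simp add: inner_vec_def matrix_vector_mult_def sum_distrib_left mult_ac)
    also have "\<dots> = (\<Omega> \<bullet> v)\<^sup>2"
      by (simp add: inner_vec_def power2_eq_square sum_product)
    finally show ?thesis .
  qed
  show ?thesis
    using integral_bounded_linear[OF T assms] by (simp add: outer)
qed

lemma inner_matrix_vector_sum:
  fixes A :: "'i \<Rightarrow> real^'n^'n"
  shows "v \<bullet> ((\<Sum>i\<in>I. c i *\<^sub>R A i) *v v) = (\<Sum>i\<in>I. c i * (v \<bullet> (A i *v v)))"
  by (induction I rule: infinite_finite_induct)
    (simp_all add: matrix_vector_mult_add_rdistrib inner_add_right
      scaleR_matrix_vector_assoc[symmetric])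

definition axi_map :: "'a::real_normed_vector \<Rightarrow> 'a \<Rightarrow> 'a \<Rightarrow> real \<times> real \<Rightarrow> 'a" where
  "axi_map R P Q = (\<lambda>(\<mu>, \<theta>). \<mu> *\<^sub>R R + sqrt (1 - \<mu>\<^sup>2) *\<^sub>R (cos \<theta> *\<^sub>R P + sin \<theta> *\<^sub>R Q))"

lemma continuous_axi_map: "continuous_on UNIV (axi_map R P Q)"
  unfolding axi_map_def case_prod_unfold by (intro continuous_intros)

lemma norm_axi_map_le:
  assumes "\<bar>\<mu>\<bar> \<le> 1"
  shows "norm (axi_map R P Q (\<mu>, \<theta>)) \<le> norm R + norm P + norm Q"
proof -
  have s: "\<bar>sqrt (1 - \<mu>\<^sup>2)\<bar> \<le> 1"
    using assms by (simp add: real_sqrt_le_1_iff abs_square_le_1)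
  have "norm (cos \<theta> *\<^sub>R P + sin \<theta> *\<^sub>R Q) \<le> norm P + norm Q"
    by (rule norm_triangle_le, rule add_mono)
      (auto intro!: mult_left_le_one_le simp: abs_cos_le_one abs_sin_le_one)
  then have "norm (sqrt (1 - \<mu>\<^sup>2) *\<^sub>R (cos \<theta> *\<^sub>R P + sin \<theta> *\<^sub>R Q)) \<le> norm P + norm Q"
    using s by (auto intro: order_trans[OF mult_left_le_one_le])
  moreover have "norm (\<mu> *\<^sub>R R) \<le> norm R"
    using assms by (auto intro: mult_left_le_one_le)
  ultimately show ?thesis
    unfolding axi_map_def by (auto intro: norm_triangle_le)
qed

lemma axi_eq_distr_axi_map:
  "axi R \<nu> = distr (\<nu> \<Otimes>\<^sub>M angle_measure) borel (axi_map R (fst (obasis R)) (snd (obasis R)))"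
  unfolding axi_def axi_map_def by (simp add: case_prod_beta)

lemma axi_map_inner:
  "axi_map R P Q (\<mu>, \<theta>) \<bullet> v
    = \<mu> * (R \<bullet> v) + sqrt (1 - \<mu>\<^sup>2) * (P \<bullet> v) * cos \<theta> + sqrt (1 - \<mu>\<^sup>2) * (Q \<bullet> v) * sin \<theta>"
  by (simp add: axi_map_def inner_add_left algebra_simps)

lemma obasis_orthonormal:
  fixes R P Q :: "real^3"
  assumes R: "norm R = 1" and PQ: "obasis R = (P, Q)"
  shows "norm P = 1 \<and> norm Q = 1 \<and> P \<bullet> Q = 0 \<and> P \<bullet> R = 0 \<and> Q \<bullet> R = 0"
proof -
  obtain S where S: "R \<in> S" "pairwise orthogonal S" "\<And>x. x \<in> S \<Longrightarrow> norm x = 1"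
    "card S = DIM(real^3)"
    using vector_in_orthonormal_basis[OF R] by metis
  have "card (S - {R}) = 2" using S by simp
  then obtain P' Q' where PQ': "S - {R} = {P', Q'}" "P' \<noteq> Q'"
    by (auto simp: card_Suc_eq numeral_2_eq_2)
  then have "norm P' = 1 \<and> norm Q' = 1 \<and> P' \<bullet> Q' = 0 \<and> P' \<bullet> R = 0 \<and> Q' \<bullet> R = 0"
    using S by (auto simp: pairwise_def orthogonal_def)
  then have "\<exists>x. case x of (P, Q) \<Rightarrow> norm P = 1 \<and> norm Q = 1 \<and> P \<bullet> Q = 0 \<and> P \<bullet> R = 0 \<and> Q \<bullet> R = 0"
    by auto
  from someI_ex[OF this] show ?thesis
    using PQ unfolding obasis_def by simp
qed

lemma sum_inner_square_orthonormal3: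
  fixes P Q R v :: "real^3"
  assumes "norm P = 1" "norm Q = 1" "norm R = 1" "P \<bullet> Q = 0" "P \<bullet> R = 0" "Q \<bullet> R = 0"
  shows "(P \<bullet> v)\<^sup>2 + (Q \<bullet> v)\<^sup>2 + (R \<bullet> v)\<^sup>2 = (norm v)\<^sup>2"
proof -
  have distinct: "P \<noteq> Q" "P \<noteq> R" "Q \<noteq> R"
    using assms by (auto simp: dot_square_norm[symmetric])
  have orth: "pairwise orthogonal {P, Q, R}"
    using assms by (auto simp: pairwise_def orthogonal_def inner_commute)
  then have "independent {P, Q, R}"
    using assms by (intro pairwise_orthogonal_independent) auto
  moreover have "card {P, Q, R} = dim (UNIV :: (real^3) set)"
    using distinct by (simp add: dim_UNIV)
  ultimately have span: "v \<in> span {P, Q, R}"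
    using card_eq_dim[of "{P, Q, R}" UNIV] by auto
  have "(\<Sum>b\<in>{P, Q, R}. (v \<bullet> b) *\<^sub>R b) = v"
    by (rule orthonormal_basis_expand[OF orth _ span]) (use assms in auto)
  then have "(norm v)\<^sup>2 = v \<bullet> (\<Sum>b\<in>{P, Q, R}. (v \<bullet> b) *\<^sub>R b)"
    by (simp add: dot_square_norm)
  also have "\<dots> = (P \<bullet> v)\<^sup>2 + (Q \<bullet> v)\<^sup>2 + (R \<bullet> v)\<^sup>2"
    using distinct by (simp add: inner_add_right power2_eq_square inner_commute)
  finally show ?thesis by simp
qed

lemma obasis_inner_square:
  fixes R P Q v :: "real^3"
  assumes "norm R = 1" and "obasis R = (P, Q)"
  shows "(P \<bullet> v)\<^sup>2 + (Q \<bullet> v)\<^sup>2 = (norm v)\<^sup>2 - (R \<bullet> v)\<^sup>2"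
  using sum_inner_square_orthonormal3[of P Q R v] obasis_orthonormal[OF assms] assms(1) by simp

locale cosine_distribution = prob_space N for N :: "real measure" +
  assumes sets_eq_borel: "sets N = sets borel"
    and AE_cosine_range: "AE \<mu> in N. \<mu> \<in> {-1..1}"
begin

lemma borel_measurable_continuous:
  "continuous_on UNIV f \<Longrightarrow> f \<in> borel_measurable N"
  using borel_measurable_continuous_onI by (simp add: measurable_cong_sets[OF sets_eq_borel])

lemma integrable_continuous:
  fixes f :: "real \<Rightarrow> 'b::{banach, second_countable_topology}"
  assumes "continuous_on UNIV f"
  shows "integrable N f"
proof -
  have "bounded (f ` {-1..1})"
    by (intro compact_imp_bounded compact_continuous_image continuous_on_subset[OF assms]) auto
  then obtain C where C: "\<forall>x\<in>{-1..1}. norm (f x) \<le> C"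
    by (meson bounded_iff imageI)
  have "AE x in N. norm (f x) \<le> C"
    using AE_cosine_range by eventually_elim (use C in auto)
  then show ?thesis
    using borel_measurable_continuous[OF assms] by (rule integrable_const_bound)
qed

lemma mean_square_le: "(\<integral>\<mu>. \<mu> \<partial>N)\<^sup>2 \<le> (\<integral>\<mu>. \<mu>\<^sup>2 \<partial>N)"
proof -
  have "0 \<le> variance (\<lambda>\<mu>. \<mu>)" by simp
  also have "variance (\<lambda>\<mu>. \<mu>) = (\<integral>\<mu>. \<mu>\<^sup>2 \<partial>N) - (\<integral>\<mu>. \<mu> \<partial>N)\<^sup>2"
    by (rule variance_eq) (auto intro!: integrable_continuous continuous_intros)
  finally show ?thesis by simp
qed

lemma second_moment_le_1: "(\<integral>\<mu>. \<mu>\<^sup>2 \<partial>N) \<le> 1"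
proof -
  have "(\<integral>\<mu>. \<mu>\<^sup>2 \<partial>N) \<le> (\<integral>\<mu>. 1 \<partial>N)"
    by (rule integral_mono_AE) (use AE_cosine_range in \<open>auto intro!: integrable_continuous
        continuous_intros simp: abs_square_le_1 abs_le_iff elim!: AE_mp\<close>)
  then show ?thesis by (simp add: prob_space)
qed

sublocale angle: pair_prob_space N angle_measure
  by (simp add: pair_prob_space_def pair_sigma_finite_def prob_space_angle_measure prob_space_axioms
      prob_space_imp_sigma_finite)

lemma sets_pair_angle: "sets (N \<Otimes>\<^sub>M angle_measure) = sets (borel :: (real \<times> real) measure)"
proof -
  have "sets (N \<Otimes>\<^sub>M angle_measure) = sets (borel \<Otimes>\<^sub>M borel :: (real \<times> real) measure)"
    by (rule sets_pair_measure_cong) (simp_all add: sets_eq_borel)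
  then show ?thesis by (metis borel_prod)
qed

lemma measurable_axi_map: "axi_map R P Q \<in> borel_measurable (N \<Otimes>\<^sub>M angle_measure)"
  unfolding measurable_cong_sets[OF sets_pair_angle refl]
  by (rule borel_measurable_continuous_onI[OF continuous_axi_map])

lemma AE_pair_cosine_range: "AE z in N \<Otimes>\<^sub>M angle_measure. fst z \<in> {-1..1}"
proof (rule angle.AE_pair_measure)
  show "{z \<in> space (N \<Otimes>\<^sub>M angle_measure). fst z \<in> {-1..1}} \<in> sets (N \<Otimes>\<^sub>M angle_measure)"
    using measurable_ident_sets[OF sets_eq_borel] by measurable
qed (use AE_cosine_range in simp)

lemma integrable_comp_axi_map:
  fixes f :: "'a::euclidean_space \<Rightarrow> 'b::{banach, second_countable_topology}"
  assumes "continuous_on UNIV f"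
  shows "integrable (N \<Otimes>\<^sub>M angle_measure) (\<lambda>z. f (axi_map R P Q z))"
proof -
  let ?B = "norm R + norm P + norm Q"
  have "bounded (f ` cball 0 ?B)"
    by (intro compact_imp_bounded compact_continuous_image continuous_on_subset[OF assms]) auto
  then obtain C where C: "\<forall>x\<in>cball 0 ?B. norm (f x) \<le> C"
    by (meson bounded_iff imageI)
  have "AE z in N \<Otimes>\<^sub>M angle_measure. norm (f (axi_map R P Q z)) \<le> C"
    using AE_pair_cosine_range
  proof eventually_elim
    case (elim z)
    then show ?case
      using C norm_axi_map_le[of "fst z" R P Q "snd z"] by auto
  qed
  moreover have "(\<lambda>z. f (axi_map R P Q z)) \<in> borel_measurable (N \<Otimes>\<^sub>M angle_measure)"
    using measurable_axi_map borel_measurable_continuous_onI[OF assms] by measurable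
  ultimately show ?thesis by (rule angle.P.integrable_const_bound)
qed

lemma integral_axi_map_inner:
  fixes R P Q v :: "'a::euclidean_space"
  shows "(\<integral>z. axi_map R P Q z \<bullet> v \<partial>(N \<Otimes>\<^sub>M angle_measure)) = (\<integral>\<mu>. \<mu> \<partial>N) * (R \<bullet> v)"
proof -
  have "(\<integral>z. axi_map R P Q z \<bullet> v \<partial>(N \<Otimes>\<^sub>M angle_measure))
      = (\<integral>\<mu>. (\<integral>\<theta>. axi_map R P Q (\<mu>, \<theta>) \<bullet> v \<partial>angle_measure) \<partial>N)"
    using angle.integral_fst'[OF integrable_comp_axi_map[of "\<lambda>x. x \<bullet> v"]]
    by (simp add: continuous_intros)
  also have "\<dots> = (\<integral>\<mu>. \<mu> * (R \<bullet> v) \<partial>N)"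
    by (simp only: axi_map_inner integral_angle_measure_trig)
  finally show ?thesis by simp
qed

lemma integral_axi_map_inner_square:
  fixes R P Q v :: "'a::euclidean_space"
  shows "(\<integral>z. (axi_map R P Q z \<bullet> v)\<^sup>2 \<partial>(N \<Otimes>\<^sub>M angle_measure))
    = (\<integral>\<mu>. \<mu>\<^sup>2 \<partial>N) * (R \<bullet> v)\<^sup>2 + (1 - (\<integral>\<mu>. \<mu>\<^sup>2 \<partial>N)) * ((P \<bullet> v)\<^sup>2 + (Q \<bullet> v)\<^sup>2) / 2"
proof -
  have "(\<integral>z. (axi_map R P Q z \<bullet> v)\<^sup>2 \<partial>(N \<Otimes>\<^sub>M angle_measure))
      = (\<integral>\<mu>. (\<integral>\<theta>. (axi_map R P Q (\<mu>, \<theta>) \<bullet> v)\<^sup>2 \<partial>angle_measure) \<partial>N)"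
    using angle.integral_fst'[OF integrable_comp_axi_map[of "\<lambda>x. (x \<bullet> v)\<^sup>2"]]
    by (simp add: continuous_intros)
  also have "\<dots> = (\<integral>\<mu>. (\<mu> * (R \<bullet> v))\<^sup>2
      + ((sqrt (1 - \<mu>\<^sup>2) * (P \<bullet> v))\<^sup>2 + (sqrt (1 - \<mu>\<^sup>2) * (Q \<bullet> v))\<^sup>2) / 2 \<partial>N)"
    by (simp only: axi_map_inner integral_angle_measure_trig_square)
  also have "\<dots> = (\<integral>\<mu>. (R \<bullet> v)\<^sup>2 * \<mu>\<^sup>2 + ((P \<bullet> v)\<^sup>2 + (Q \<bullet> v)\<^sup>2) / 2 * (1 - \<mu>\<^sup>2) \<partial>N)"
  proof (rule integral_cong_AE)
    show "AE \<mu> in N. (\<mu> * (R \<bullet> v))\<^sup>2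
        + ((sqrt (1 - \<mu>\<^sup>2) * (P \<bullet> v))\<^sup>2 + (sqrt (1 - \<mu>\<^sup>2) * (Q \<bullet> v))\<^sup>2) / 2
        = (R \<bullet> v)\<^sup>2 * \<mu>\<^sup>2 + ((P \<bullet> v)\<^sup>2 + (Q \<bullet> v)\<^sup>2) / 2 * (1 - \<mu>\<^sup>2)"
      using AE_cosine_range
    proof eventually_elim
      case (elim \<mu>)
      \<comment> \<open>outside \<open>[-1, 1]\<close> the square root is negative and this identity fails\<close>
      then have sqrt_sq: "(sqrt (1 - \<mu>\<^sup>2))\<^sup>2 = 1 - \<mu>\<^sup>2"
        by (simp add: abs_square_le_1 abs_le_iff)
      show ?case
        unfolding power_mult_distrib sqrt_sq by (simp add: field_simps)
    qed
  qed (auto intro!: borel_measurable_continuous continuous_intros)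
  also have "\<dots> = (\<integral>\<mu>. \<mu>\<^sup>2 \<partial>N) * (R \<bullet> v)\<^sup>2
      + (1 - (\<integral>\<mu>. \<mu>\<^sup>2 \<partial>N)) * ((P \<bullet> v)\<^sup>2 + (Q \<bullet> v)\<^sup>2) / 2"
    by (simp add: integrable_continuous continuous_intros prob_space algebra_simps)
  finally show ?thesis .
qed

lemma prob_space_axi: "prob_space (axi R N)"
  unfolding axi_eq_distr_axi_map by (rule angle.P.prob_space_distr[OF measurable_axi_map])

lemma integrable_axi:
  fixes f :: "real^3 \<Rightarrow> 'b::{banach, second_countable_topology}"
  assumes "continuous_on UNIV f"
  shows "integrable (axi R N) f"
  unfolding axi_eq_distr_axi_map
  using assms by (simp add: integrable_distr_eq[OF measurable_axi_map] borel_measurable_continuous_onI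
      integrable_comp_axi_map)

lemma integral_axi:
  fixes f :: "real^3 \<Rightarrow> 'b::{banach, second_countable_topology}"
  assumes "continuous_on UNIV f"
  shows "integral\<^sup>L (axi R N) f
    = (\<integral>z. f (axi_map R (fst (obasis R)) (snd (obasis R)) z) \<partial>(N \<Otimes>\<^sub>M angle_measure))"
  unfolding axi_eq_distr_axi_map
  using assms by (simp add: integral_distr[OF measurable_axi_map] borel_measurable_continuous_onI)

lemma axi_mass: "(\<integral>\<Omega>. 1 \<partial>axi R N) = (1::real)"
  using prob_space.prob_space[OF prob_space_axi[of R]] by simp

lemma inner_axi_first_moment: "(\<integral>\<Omega>. \<Omega> \<partial>axi R N) \<bullet> v = (\<integral>\<mu>. \<mu> \<partial>N) * (R \<bullet> v)"
proof -
  have "(\<integral>\<Omega>. \<Omega> \<partial>axi R N) \<bullet> v = (\<integral>\<Omega>. \<Omega> \<bullet> v \<partial>axi R N)"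
    by (simp add: integrable_axi)
  also have "\<dots> = (\<integral>\<mu>. \<mu> \<partial>N) * (R \<bullet> v)"
    by (simp add: integral_axi continuous_intros integral_axi_map_inner)
  finally show ?thesis .
qed

lemma axi_second_moment_form:
  assumes "norm R = 1"
  shows "v \<bullet> ((\<integral>\<Omega>. (\<chi> a b. \<Omega>$a * \<Omega>$b) \<partial>axi R N) *v v)
    = (\<integral>\<mu>. \<mu>\<^sup>2 \<partial>N) * (R \<bullet> v)\<^sup>2 + (1 - (\<integral>\<mu>. \<mu>\<^sup>2 \<partial>N)) * ((norm v)\<^sup>2 - (R \<bullet> v)\<^sup>2) / 2"
proof -
  obtain P Q where PQ: "obasis R = (P, Q)" by fastforce
  have "v \<bullet> ((\<integral>\<Omega>. (\<chi> a b. \<Omega>$a * \<Omega>$b) \<partial>axi R N) *v v) = (\<integral>\<Omega>. (\<Omega> \<bullet> v)\<^sup>2 \<partial>axi R N)"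
    by (intro quadratic_form_integral_outer integrable_axi continuous_intros)
  also have "\<dots> = (\<integral>z. (axi_map R P Q z \<bullet> v)\<^sup>2 \<partial>(N \<Otimes>\<^sub>M angle_measure))"
    by (simp add: integral_axi continuous_intros PQ)
  also have "\<dots> = (\<integral>\<mu>. \<mu>\<^sup>2 \<partial>N) * (R \<bullet> v)\<^sup>2
      + (1 - (\<integral>\<mu>. \<mu>\<^sup>2 \<partial>N)) * ((norm v)\<^sup>2 - (R \<bullet> v)\<^sup>2) / 2"
    by (simp add: integral_axi_map_inner_square obasis_inner_square[OF assms PQ])
  finally show ?thesis .
qed

end

lemma cosine_distributionI:
  assumes "prob_space N" "sets N = sets borel" "emeasure N {-1..1} = 1"
  shows "cosine_distribution N"
proof -
  interpret prob_space N by fact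
  have "AE \<mu> in N. \<mu> \<in> {-1..1}"
    using assms(3) by (subst AE_in_set_eq_1) (auto simp: assms(2) emeasure_eq_measure)
  then show ?thesis
    by unfold_locales (use assms(2) in auto)
qed

section \<open>The equality case of the moment inequality\<close>

lemma square_div_le_weight:
  fixes w a b L :: real
  assumes "0 \<le> w" "a\<^sup>2 \<le> b" "w * b \<le> L" "0 < L"
  shows "(w * a)\<^sup>2 / L \<le> w"
proof -
  have "(w * a)\<^sup>2 = w * (w * a\<^sup>2)" by (simp add: power2_eq_square)
  also have "\<dots> \<le> w * (w * b)"
    using assms by (simp add: mult_left_mono)
  also have "\<dots> \<le> w * L"
    using assms by (simp add: mult_left_mono)
  finally show ?thesis using assms(4) by (simp add: divide_le_eq)
qed

lemma square_div_eq_weight_imp: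
  fixes w a b r L :: real
  assumes "0 < w" "a\<^sup>2 \<le> b" "0 \<le> r" "L = w * b + r" "(w * a)\<^sup>2 / L = w" "0 < L"
  shows "a\<^sup>2 = b \<and> r = 0"
proof -
  have "w * (w * a\<^sup>2) = w * L"
    using assms(5,6) by (simp add: divide_eq_eq power2_eq_square mult_ac)
  then have "w * a\<^sup>2 = w * b + r"
    using assms(1,4) by simp
  moreover have "w * a\<^sup>2 \<le> w * b"
    using assms(1,2) by simp
  ultimately show ?thesis
    using assms(1,3) by auto
qed

lemma moment_equality_cases:
  fixes I :: "'i set" and w a b L F :: "'i \<Rightarrow> real"
  assumes I: "finite I"
    and w: "\<forall>i\<in>I. 0 \<le> w i" and ab: "\<forall>i\<in>I. (a i)\<^sup>2 \<le> b i \<and> b i \<le> 1"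
    and L: "\<forall>j\<in>I. L j = w j * b j + (\<Sum>i\<in>I - {j}. w i * (1 - b i)) / 2"
    and F: "\<forall>j\<in>I. F j = w j * a j"
    and L_pos: "\<forall>j\<in>I. 0 < L j"
    and eq: "(\<Sum>j\<in>I. (F j)\<^sup>2 / L j) = sum w I"
  shows "(\<exists>i\<in>I. L i = (F i)\<^sup>2 / sum w I \<and>
            (\<forall>j\<in>I. \<forall>k\<in>I. j \<noteq> i \<and> k \<noteq> i \<and> j \<noteq> k \<longrightarrow> L j = L k \<and> F j = 0 \<and> F k = 0))
       \<or> (\<forall>j\<in>I. \<bar>F j\<bar> = L j)"
proof -
  define r where "r j = (\<Sum>i\<in>I - {j}. w i * (1 - b i)) / 2" for j
  have loss_nonneg: "0 \<le> w i * (1 - b i)" if "i \<in> I" for i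
    using w ab that by simp
  have r_nonneg: "0 \<le> r j" for j
    unfolding r_def by (intro divide_nonneg_nonneg sum_nonneg) (use loss_nonneg in auto)
  have L_r: "L j = w j * b j + r j" if "j \<in> I" for j
    using L that unfolding r_def by blast
  have le: "(F j)\<^sup>2 / L j \<le> w j" if "j \<in> I" for j
    using square_div_le_weight[of "w j" "a j" "b j" "L j"] w ab L_pos r_nonneg L_r F that by auto
  have tight: "(F j)\<^sup>2 / L j = w j" if "j \<in> I" for j
    by (rule sum_mono_inv[OF eq le that I])
  have sharp: "(a j)\<^sup>2 = b j \<and> r j = 0" if "j \<in> I" "0 < w j" for j
  proof (rule square_div_eq_weight_imp)
    show "(w j * a j)\<^sup>2 / L j = w j"
      using tight[OF that(1)] F that(1) by simp
  qed (use that ab L_r L_pos r_nonneg in auto)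
  have others_saturated: "w i * (1 - b i) = 0" if "j \<in> I" "0 < w j" "i \<in> I" "i \<noteq> j" for i j
  proof -
    have "(\<Sum>i\<in>I - {j}. w i * (1 - b i)) = 0"
      using sharp[OF that(1,2)] by (simp add: r_def)
    then show ?thesis
      using sum_nonneg_eq_0_iff[of "I - {j}" "\<lambda>i. w i * (1 - b i)"] I loss_nonneg that(3,4) by auto
  qed
  consider (several) j k where "j \<in> I" "k \<in> I" "j \<noteq> k" "0 < w j" "0 < w k"
    | (single) j where "j \<in> I" "0 < w j" "\<forall>i\<in>I - {j}. w i = 0"
    | (none) "\<forall>i\<in>I. w i = 0"
  proof (cases "\<exists>j\<in>I. 0 < w j")
    case True
    then obtain j where j: "j \<in> I" "0 < w j" by blast
    show ?thesis
    proof (cases "\<exists>k\<in>I - {j}. 0 < w k")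
      case True
      then obtain k where k: "k \<in> I" "k \<noteq> j" "0 < w k" by blast
      show ?thesis by (rule that(1)[of j k]) (use j k in auto)
    next
      case False
      show ?thesis by (rule that(2)[OF j]) (use False w in force)
    qed
  next
    case False
    show ?thesis by (rule that(3)) (use False w in force)
  qed
  then show ?thesis
  proof cases
    case several
    have saturated: "w i * (1 - b i) = 0" if i: "i \<in> I" for i
    proof (cases "i = j")
      case True
      then show ?thesis using others_saturated[OF several(2,5) i] several(3) by simp
    next
      case False
      then show ?thesis using others_saturated[OF several(1,4) i] by simp
    qed
    have "\<bar>F i\<bar> = L i" if i: "i \<in> I" for i
    proof -
      have "r i = 0"
        unfolding r_def by (subst sum.neutral) (use saturated in auto)
      then have "L i = w i"
        using L_r[OF i] saturated[OF i] by (simp add: algebra_simps)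
      then have "0 < w i" "b i = 1"
        using L_pos saturated[OF i] i by auto
      then have "\<bar>a i\<bar> = 1"
        using sharp[OF i] by (simp add: abs_square_eq_1)
      then show ?thesis
        using \<open>L i = w i\<close> \<open>0 < w i\<close> F i by (simp add: abs_mult)
    qed
    then show ?thesis by blast
  next
    case single
    have total: "sum w I = w j"
      using single I by (simp add: sum.remove[of I j])
    have L_j: "L j = (F j)\<^sup>2 / sum w I"
      using sharp[OF single(1,2)] L_r[OF single(1)] F single(1,2) total
      by (simp add: power_mult_distrib power2_eq_square)
    have others: "L k = w j * (1 - b j) / 2 \<and> F k = 0" if "k \<in> I" "k \<noteq> j" for k
    proof -
      have "(\<Sum>i\<in>I - {k}. w i * (1 - b i)) = w j * (1 - b j)"
        using single that I by (simp add: sum.remove[of "I - {k}" j])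
      then show ?thesis
        using L F single that by simp
    qed
    have "\<forall>j'\<in>I. \<forall>k\<in>I. j' \<noteq> j \<and> k \<noteq> j \<and> j' \<noteq> k \<longrightarrow> L j' = L k \<and> F j' = 0 \<and> F k = 0"
    proof (intro ballI impI)
      fix j' k assume "j' \<in> I" "k \<in> I" "j' \<noteq> j \<and> k \<noteq> j \<and> j' \<noteq> k"
      then show "L j' = L k \<and> F j' = 0 \<and> F k = 0"
        using others[of j'] others[of k] by auto
    qed
    then show ?thesis
      by (intro disjI1 bexI[OF _ single(1)] conjI L_j)
  next
    case none
    show ?thesis
    proof (intro disjI2 ballI)
      fix j assume j: "j \<in> I"
      then have "L j = 0" using none L by simp
      with L_pos j show "\<bar>F j\<bar> = L j" by auto
    qed
  qed
qed

lemma mom0_eq: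
  assumes "\<forall>i\<in>{1,2,3}. cosine_distribution (\<nu> i)"
  shows "mom0 R w \<nu> = sum w {1,2,3}"
  unfolding mom0_def by (rule sum.cong) (use assms cosine_distribution.axi_mass in auto)

context
  fixes R :: "nat \<Rightarrow> real^3" and w :: "nat \<Rightarrow> real" and \<nu> :: "nat \<Rightarrow> real measure"
  assumes cosine: "\<forall>i\<in>{1,2,3}. cosine_distribution (\<nu> i)"
    and orthonormal: "\<forall>i\<in>{1,2,3}. \<forall>j\<in>{1,2,3}. R i \<bullet> R j = (if i = j then 1 else 0)"
begin

lemma inner_mom1_eq:
  assumes j: "j \<in> {1,2,3}"
  shows "mom1 R w \<nu> \<bullet> R j = w j * (\<integral>\<mu>. \<mu> \<partial>\<nu> j)"
proof -
  have "mom1 R w \<nu> \<bullet> R j = (\<Sum>i\<in>{1,2,3}. w i * ((\<integral>\<mu>. \<mu> \<partial>\<nu> i) * (R i \<bullet> R j)))"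
    unfolding mom1_def inner_sum_left
    by (rule sum.cong) (use cosine cosine_distribution.inner_axi_first_moment in auto)
  also have "\<dots> = (\<Sum>i\<in>{1,2,3}. if i = j then w j * (\<integral>\<mu>. \<mu> \<partial>\<nu> j) else 0)"
    by (rule sum.cong) (use orthonormal j in auto)
  finally show ?thesis
    using j by simp
qed

lemma quadratic_mom2_eq:
  assumes j: "j \<in> {1,2,3}"
  shows "R j \<bullet> (mom2 R w \<nu> *v R j)
    = w j * (\<integral>\<mu>. \<mu>\<^sup>2 \<partial>\<nu> j) + (\<Sum>i\<in>{1,2,3} - {j}. w i * (1 - (\<integral>\<mu>. \<mu>\<^sup>2 \<partial>\<nu> i))) / 2"
proof -
  have unit: "norm (R i) = 1" if "i \<in> {1,2,3}" for i
    using orthonormal[rule_format, OF that that] by (simp add: norm_eq_1)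
  have "R j \<bullet> (mom2 R w \<nu> *v R j) = (\<Sum>i\<in>{1,2,3}. w i *
      ((\<integral>\<mu>. \<mu>\<^sup>2 \<partial>\<nu> i) * (R i \<bullet> R j)\<^sup>2 + (1 - (\<integral>\<mu>. \<mu>\<^sup>2 \<partial>\<nu> i)) * ((norm (R j))\<^sup>2 - (R i \<bullet> R j)\<^sup>2) / 2))"
    unfolding mom2_def inner_matrix_vector_sum
    by (rule sum.cong) (use cosine cosine_distribution.axi_second_moment_form unit in auto)
  also have "\<dots> = (\<Sum>i\<in>{1,2,3}. if i = j then w j * (\<integral>\<mu>. \<mu>\<^sup>2 \<partial>\<nu> j)
      else w i * (1 - (\<integral>\<mu>. \<mu>\<^sup>2 \<partial>\<nu> i)) / 2)"
    by (rule sum.cong) (use orthonormal unit[OF j] j in auto)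
  also have "\<dots> = w j * (\<integral>\<mu>. \<mu>\<^sup>2 \<partial>\<nu> j) + (\<Sum>i\<in>{1,2,3} - {j}. w i * (1 - (\<integral>\<mu>. \<mu>\<^sup>2 \<partial>\<nu> i))) / 2"
    using j by (simp add: sum.remove[of _ j] sum_divide_distrib)
  finally show ?thesis .
qed

end

theorem mainTheorem6:
  fixes R :: "nat \<Rightarrow> real^3" and w :: "nat \<Rightarrow> real" and \<nu> :: "nat \<Rightarrow> real measure"
  assumes unit: "\<forall>i\<in>{1,2,3}. norm (R i) = 1"
    and orth: "\<forall>i\<in>{1,2,3}. \<forall>j\<in>{1,2,3}. i \<noteq> j \<longrightarrow> R i \<bullet> R j = 0"
    and wpos: "\<forall>i\<in>{1,2,3}. w i \<ge> 0"
    and prob: "\<forall>i\<in>{1,2,3}. prob_space (\<nu> i)"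
    and borel: "\<forall>i\<in>{1,2,3}. sets (\<nu> i) = sets borel"
    and supp: "\<forall>i\<in>{1,2,3}. emeasure (\<nu> i) {-1..1} = 1"
    and lpos: "\<forall>i\<in>{1,2,3}. R i \<bullet> (mom2 R w \<nu> *v R i) > 0"
    and eq: "(\<Sum>i\<in>{1,2,3}. (mom1 R w \<nu> \<bullet> R i)\<^sup>2 / (R i \<bullet> (mom2 R w \<nu> *v R i))) = mom0 R w \<nu>"
  shows "(\<exists>i\<in>{1,2,3}. R i \<bullet> (mom2 R w \<nu> *v R i) = (mom1 R w \<nu> \<bullet> R i)\<^sup>2 / mom0 R w \<nu> \<and>
            (\<forall>j\<in>{1,2,3}. \<forall>k\<in>{1,2,3}. j \<noteq> i \<and> k \<noteq> i \<and> j \<noteq> k \<longrightarrow>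
               R j \<bullet> (mom2 R w \<nu> *v R j) = R k \<bullet> (mom2 R w \<nu> *v R k) \<and>
               mom1 R w \<nu> \<bullet> R j = 0 \<and> mom1 R w \<nu> \<bullet> R k = 0))
       \<or> (\<forall>j\<in>{1,2,3}. \<bar>mom1 R w \<nu> \<bullet> R j\<bar> = R j \<bullet> (mom2 R w \<nu> *v R j))"
proof -
  have cosine: "\<forall>i\<in>{1,2,3}. cosine_distribution (\<nu> i)"
    using prob borel supp by (auto intro: cosine_distributionI)
  have orthonormal: "\<forall>i\<in>{1,2,3}. \<forall>j\<in>{1,2,3}. R i \<bullet> R j = (if i = j then 1 else 0)"
    using unit orth by (auto simp: norm_eq_1)
  show ?thesis
    unfolding mom0_eq[OF cosine]
  proof (rule moment_equality_cases)
    show "\<forall>i\<in>{1,2,3}. (\<integral>\<mu>. \<mu> \<partial>\<nu> i)\<^sup>2 \<le> (\<integral>\<mu>. \<mu>\<^sup>2 \<partial>\<nu> i) \<and> (\<integral>\<mu>. \<mu>\<^sup>2 \<partial>\<nu> i) \<le> 1"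
      using cosine cosine_distribution.mean_square_le cosine_distribution.second_moment_le_1 by blast
  qed (use wpos lpos eq mom0_eq[OF cosine] inner_mom1_eq[OF cosine orthonormal]
      quadratic_mom2_eq[OF cosine orthonormal] in auto)
qed

end
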